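(* Let $u\in M_k$. (a) If $u$ is an interior point of $C(A)$, then $x^u\in\mathcal W'_k$ satisfies a linear differential equation of order $R_k$ over $\mathbb C(\lambda)$, i.e. there are $c_0,\dots,c_{R_k}\in\mathbb C(\lambda)$, not all zero, with $\sum_{i=0}^{R_k}c_iD_\lambda^i(x^u)=0$ in $\mathcal W'_k$. (b) If $u$ is a boundary point of $C(A)$, then $x^u\in\mathcal W'_k$ satisfies a linear differential equation of order $R_k+1$ over $\mathbb C(\lambda)$.
   Context: Let $A=\{\mathbf a_1,\dots,\mathbf a_m\}\subseteq\mathbb Z^n$ be linearly independent over $\mathbb R$, $\mathbf a_0\in\mathbb Z^n$, and $\ell_0,\dots,\ell_m$ positive integers with gcd $1$, $\ell_0\mathbf a_0=\sum_{j=1}^m\ell_j\mathbf a_j$, $\ell_0=\sum_{j=1}^m\ell_j$. Let $f_\lambda=\sum_{j=1}^m\ell_jx^{\mathbf a_j}-\ell_0\lambda x^{\mathbf a_0}$. Let $V$ be the real span of $A$, $V_{\mathbb Z}=V\cap\mathbb Z^n$, $C(A)$ the closed real cone generated by $A$ (interior and boundary are relative to $V$), $M=V_{\mathbb Z}\cap C(A)$, $\mathbb ZA_+$ the group generated by $A\cup\{\mathbf a_0\}$. Fix a coset $\mathcal C_k$ of $\mathbb ZA_+$ in $V_{\mathbb Z}$, $M_k=M\cap\mathcal C_k$, $S'_k$ the $\mathbb C(\lambda)$-span of $\{x^u:u\in M_k\}$, $D_i=x_i\partial/\partial x_i+x_i\partial f_\lambda/\partial x_i$ ($i=1,\dots,n$),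 $D_\lambda=\partial/\partial\lambda-\ell_0x^{\mathbf a_0}$, and $\mathcal W'_k=S'_k/\sum_iD_iS'_k$ (with $D_\lambda$ acting on it). Let $P(A)=\{\sum_jc_j\mathbf a_j:0\le c_j<1\}$, $\mathcal B=V_{\mathbb Z}\cap P(A)$, $\mathcal B_k=\mathcal B\cap\mathcal C_k$, and let $R_k$ be the number of elements $\sum_jv_j\mathbf a_j$ of $\mathcal B_k$ with all $v_j>0$ (interior points of $P(A)$). *)

theory Defs
  imports "HOL-Analysis.Analysis" "HOL-Computational_Algebra.Computational_Algebra"
begin

type_synonym ratfun = "complex poly fract"

definition lam :: ratfun where
  "lam = Fract [:0, 1:] 1"

definition ratfun_deriv :: "ratfun \<Rightarrow> ratfun" where
  "ratfun_deriv r = (THE s. \<forall>p q. q \<noteq> 0 \<longrightarrow> r = Fract p q \<longrightarrow>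
      s = Fract (pderiv p * q - p * pderiv q) (q * q))"

text \<open>An element of the C(lambda)-span of monomials x^u (u a lattice point in R^n, with
  'n a finite index type) is represented by its coefficient function g, which must have
  finite support.\<close>

type_synonym 'n lpoly = "(real ^ 'n) \<Rightarrow> ratfun"

definition monom :: "real ^ 'n \<Rightarrow> 'n lpoly" where
  "monom u = (\<lambda>w. if w = u then 1 else 0)"

definition Sk :: "(real ^ 'n) set \<Rightarrow> 'n lpoly set" where
  "Sk Mk = {g. finite {w. g w \<noteq> 0} \<and> {w. g w \<noteq> 0} \<subseteq> Mk}"

text \<open>Exponent vectors a 0, ..., a m (a 0 = a_0), weights l 0, ..., l m.
  f_lambda = sum_{j=1}^m l_j x^{a_j} - l_0 lambda x^{a_0}.
  D_i (g) = x_i d g / d x_i + x_i (d f_lambda/ d x_i) g, coefficientwise: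
  x_i d/dx_i x^w = w_i x^w and x_i d f/dx_i = sum_j l_j a_{j,i} x^{a_j} - l_0 lambda a_{0,i} x^{a_0}.\<close>
definition Dx :: "nat \<Rightarrow> (nat \<Rightarrow> real ^ 'n) \<Rightarrow> (nat \<Rightarrow> nat) \<Rightarrow> 'n \<Rightarrow> 'n lpoly \<Rightarrow> 'n lpoly" where
  "Dx m a l i g = (\<lambda>w. of_int \<lfloor>w $ i\<rfloor> * g w
      + (\<Sum>j\<in>{1..m}. of_nat (l j) * of_int \<lfloor>a j $ i\<rfloor> * g (w - a j))
      - of_nat (l 0) * lam * of_int \<lfloor>a 0 $ i\<rfloor> * g (w - a 0))"

definition Dlam :: "(nat \<Rightarrow> real ^ 'n) \<Rightarrow> (nat \<Rightarrow> nat) \<Rightarrow> 'n lpoly \<Rightarrow> 'n lpoly" where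
  "Dlam a l g = (\<lambda>w. ratfun_deriv (g w) - of_nat (l 0) * g (w - a 0))"

definition DSk :: "nat \<Rightarrow> (nat \<Rightarrow> real ^ 'n) \<Rightarrow> (nat \<Rightarrow> nat) \<Rightarrow> (real ^ 'n) set \<Rightarrow> 'n lpoly set" where
  "DSk m a l Mk = {(\<lambda>w. \<Sum>i\<in>UNIV. Dx m a l i (G i) w) | G. \<forall>i. G i \<in> Sk Mk}"

definition lattice_pt :: "real ^ 'n \<Rightarrow> bool" where
  "lattice_pt u \<longleftrightarrow> (\<forall>i. u $ i \<in> \<int>)"

definition VZ :: "nat \<Rightarrow> (nat \<Rightarrow> real ^ 'n) \<Rightarrow> (real ^ 'n) set" where
  "VZ m a = {u \<in> span (a ` {1..m}). lattice_pt u}"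

definition coneA :: "nat \<Rightarrow> (nat \<Rightarrow> real ^ 'n) \<Rightarrow> (real ^ 'n) set" where
  "coneA m a = closure (convex_cone hull (a ` {1..m}))"

definition ZAplus :: "nat \<Rightarrow> (nat \<Rightarrow> real ^ 'n) \<Rightarrow> (real ^ 'n) set" where
  "ZAplus m a = {(\<Sum>j\<in>{0..m}. of_int (z j) *\<^sub>R a j) | z. True}"

definition Bk_int :: "nat \<Rightarrow> (nat \<Rightarrow> real ^ 'n) \<Rightarrow> (real ^ 'n) set \<Rightarrow> (real ^ 'n) set" where
  "Bk_int m a Ck = {u \<in> VZ m a \<inter> Ck. \<exists>v. (\<forall>j\<in>{1..m}. 0 < v j \<and> v j < 1)
                                     \<and> u = (\<Sum>j\<in>{1..m}. v j *\<^sub>R a j)}"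

end

(*
  Let coord j be the j-th coordinate with respect to the basis a 1, ..., a m of V and
  weight u = sum of the coordinates, so that a 0 and every a j have weight 1. Applying the
  operator sum_i coord j (e_i) D_i to x^w gives the relation

    coord j w * x^w + l j * x^(w + a j) - l j * lambda * x^(w + a 0) = 0   in W'_k.

  Hence, for an interior point v outside the half-open parallelepiped P(A), some coordinate
  of v is at least 1 and x^v = lambda x^(v - a j + a 0) modulo a multiple of x^(v - a j),
  which has smaller weight. Iterating this inside the finite set of interior points of one
  weight either reaches B_k or runs into a cycle p = sigma^t p, giving (1 - lambda^t) x^p = 0
  modulo lower weights. By induction on the weight, every interior monomial lies in the span of
  the x^b, b in the interior part of B_k. Finally D_lambda^i x^u is a combination of the
  x^(u + s a 0), s <= i, which are interior points except possibly u itself; so the R_k + 1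
  elements D_lambda^i x^u (i <= R_k) for interior u, resp. the R_k + 2 elements for boundary u,
  live in a space spanned by R_k, resp. R_k + 1, classes and are linearly dependent.
*)
theory Submission
  imports Defs
begin

unbundle no fps_syntax

lemma card_support_lt_imp_dependent:
  fixes \<alpha> :: "'i \<Rightarrow> 'x \<Rightarrow> 'k::field"
  assumes "finite F" and "finite J" and "card F < card J"
    and "\<forall>j\<in>J. \<forall>x. x \<notin> F \<longrightarrow> \<alpha> j x = 0"
  shows "\<exists>c. (\<exists>j\<in>J. c j \<noteq> 0) \<and> (\<forall>x. (\<Sum>j\<in>J. c j * \<alpha> j x) = 0)"
  using assms
proof (induction F arbitrary: J \<alpha> rule: finite_induct)
  case empty
  then obtain j where "j \<in> J" by fastforce
  then show ?case using empty by (intro exI[of _ "\<lambda>_. 1"]) auto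
next
  case (insert f F)
  show ?case
  proof (cases "\<forall>j\<in>J. \<alpha> j f = 0")
    case True
    then have "\<forall>j\<in>J. \<forall>x. x \<notin> F \<longrightarrow> \<alpha> j x = 0"
      using insert.prems(3) by (metis insertE)
    then show ?thesis using insert by auto
  next
    case False
    then obtain k where k: "k \<in> J" "\<alpha> k f \<noteq> 0" by blast
    \<comment> \<open>Gaussian elimination: subtracting multiples of \<open>\<alpha> k\<close> clears the coordinate \<open>f\<close>.\<close>
    define \<beta> where "\<beta> j x = \<alpha> j x - (\<alpha> j f / \<alpha> k f) * \<alpha> k x" for j x
    have "\<forall>j\<in>J - {k}. \<forall>x. x \<notin> F \<longrightarrow> \<beta> j x = 0"
    proof (intro ballI allI impI)
      fix j x assume "j \<in> J - {k}" "x \<notin> F"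
      then show "\<beta> j x = 0" using insert.prems(3) k unfolding \<beta>_def by (cases "x = f") auto
    qed
    moreover have "card F < card (J - {k})" using insert k by auto
    ultimately obtain c where c: "\<exists>j\<in>J - {k}. c j \<noteq> 0"
        "\<forall>x. (\<Sum>j\<in>J - {k}. c j * \<beta> j x) = 0"
      using insert.IH insert.prems(1) by blast
    define d where
      "d j = (if j = k then - (\<Sum>i\<in>J - {k}. c i * (\<alpha> i f / \<alpha> k f)) else c j)" for j
    have "(\<Sum>j\<in>J. d j * \<alpha> j x) = (\<Sum>j\<in>J - {k}. c j * \<beta> j x)" for x
    proof -
      have "(\<Sum>j\<in>J. d j * \<alpha> j x) = d k * \<alpha> k x + (\<Sum>j\<in>J - {k}. c j * \<alpha> j x)"
        using k insert.prems(1) by (simp add: sum.remove d_def)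
      then show ?thesis
        by (simp add: \<beta>_def d_def right_diff_distrib sum_subtractf sum_distrib_right
            mult.assoc)
    qed
    moreover have "\<exists>j\<in>J. d j \<noteq> 0" using c(1) unfolding d_def by auto
    ultimately show ?thesis using c(2) by auto
  qed
qed

lemma finite_sublevel_induct:
  fixes f :: "'a \<Rightarrow> 'b::linorder"
  assumes fin: "\<And>x. x \<in> S \<Longrightarrow> finite {y \<in> S. f y < f x}"
    and step: "\<And>x. x \<in> S \<Longrightarrow> (\<And>y. y \<in> S \<Longrightarrow> f y < f x \<Longrightarrow> P y) \<Longrightarrow> P x"
    and "x \<in> S"
  shows "P x"
proof -
  have "\<forall>x\<in>S. card {y \<in> S. f y < f x} = n \<longrightarrow> P x" for n
  proof (induction n rule: less_induct)
    case (less n)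
    show ?case
    proof (intro ballI impI)
      fix x assume x: "x \<in> S" "card {y \<in> S. f y < f x} = n"
      show "P x"
      proof (rule step[OF x(1)])
        fix y assume y: "y \<in> S" "f y < f x"
        then have "{z \<in> S. f z < f y} \<subset> {z \<in> S. f z < f x}" by auto
        then have "card {z \<in> S. f z < f y} < n" using psubset_card_mono[OF fin[OF x(1)]] x(2) by simp
        then show "P y" using less y(1) by blast
      qed
    qed
  qed
  then show ?thesis using assms(3) by blast
qed

lemma convex_cone_sum:
  assumes "convex_cone S" and "finite K" and "\<forall>k\<in>K. f k \<in> S"
  shows "sum f K \<in> S"
  using assms(2,3)
  by (induction K rule: finite_induct)
    (simp_all add: convex_cone_contains_0[OF assms(1)] convex_cone_add[OF assms(1)])

locale lincomb_closed =
  fixes I :: "('x \<Rightarrow> 'k::field) set"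
  assumes zero_mem: "(\<lambda>_. 0) \<in> I"
    and add_mem: "f \<in> I \<Longrightarrow> g \<in> I \<Longrightarrow> (\<lambda>z. f z + g z) \<in> I"
    and scale_mem: "f \<in> I \<Longrightarrow> (\<lambda>z. c * f z) \<in> I"
begin

lemma sum_mem:
  assumes "finite K" and "\<forall>i\<in>K. f i \<in> I"
  shows "(\<lambda>z. \<Sum>i\<in>K. c i * f i z) \<in> I"
  using assms
proof (induction K rule: finite_induct)
  case (insert i K)
  then have "(\<lambda>z. c i * f i z + (\<Sum>i\<in>K. c i * f i z)) \<in> I"
    by (intro add_mem scale_mem) auto
  with insert show ?case by simp
qed (simp add: zero_mem)

text \<open>Classes in the quotient by \<open>I\<close> are handled through representatives: \<open>supported_mod F g\<close>
  says that the class of \<open>g\<close> lies in the span of the classes of the point masses at \<open>F\<close>.\<close>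
definition supported_mod :: "'x set \<Rightarrow> ('x \<Rightarrow> 'k) \<Rightarrow> bool" where
  "supported_mod F g \<longleftrightarrow> (\<exists>h\<in>I. \<forall>z. z \<notin> F \<longrightarrow> g z = h z)"

lemma supported_mod_mem: "g \<in> I \<Longrightarrow> supported_mod F g"
  unfolding supported_mod_def by blast

lemma supported_mod_support: "(\<And>z. g z \<noteq> 0 \<Longrightarrow> z \<in> F) \<Longrightarrow> supported_mod F g"
  unfolding supported_mod_def using zero_mem by (intro bexI[of _ "\<lambda>_. 0"]) auto

lemma supported_mod_mono: "F \<subseteq> F' \<Longrightarrow> supported_mod F g \<Longrightarrow> supported_mod F' g"
  unfolding supported_mod_def by blast

lemma supported_mod_cong: "supported_mod F g \<Longrightarrow> (\<And>z. g z = h z) \<Longrightarrow> supported_mod F h"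
  unfolding supported_mod_def by simp

lemma supported_mod_add:
  "supported_mod F g \<Longrightarrow> supported_mod F h \<Longrightarrow> supported_mod F (\<lambda>z. g z + h z)"
proof -
  assume "supported_mod F g" "supported_mod F h"
  then obtain g' h' where "g' \<in> I" "h' \<in> I" "\<forall>z. z \<notin> F \<longrightarrow> g z = g' z \<and> h z = h' z"
    unfolding supported_mod_def by blast
  then show ?thesis
    unfolding supported_mod_def by (intro bexI[of _ "\<lambda>z. g' z + h' z"] add_mem) auto
qed

lemma supported_mod_scale: "supported_mod F g \<Longrightarrow> supported_mod F (\<lambda>z. c * g z)"
proof -
  assume "supported_mod F g"
  then obtain g' where "g' \<in> I" "\<forall>z. z \<notin> F \<longrightarrow> g z = g' z"
    unfolding supported_mod_def by blast
  then show ?thesis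
    unfolding supported_mod_def by (intro bexI[of _ "\<lambda>z. c * g' z"] scale_mem) auto
qed

lemma supported_mod_sum:
  assumes "finite K" and "\<forall>i\<in>K. supported_mod F (f i)"
  shows "supported_mod F (\<lambda>z. \<Sum>i\<in>K. c i * f i z)"
  using assms
proof (induction K rule: finite_induct)
  case (insert i K)
  then have "supported_mod F (\<lambda>z. c i * f i z + (\<Sum>i\<in>K. c i * f i z))"
    by (intro supported_mod_add supported_mod_scale) auto
  with insert show ?case by simp
qed (auto intro: supported_mod_support)

lemma supported_mod_finite_support:
  assumes "finite S" and "\<And>z. g z \<noteq> 0 \<Longrightarrow> z \<in> S"
    and "\<And>y. y \<in> S \<Longrightarrow> supported_mod F (\<lambda>z. if z = y then 1 else 0)"
  shows "supported_mod F g"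
proof -
  have "supported_mod F (\<lambda>z. \<Sum>y\<in>S. g y * (if z = y then 1 else 0))"
    using assms by (intro supported_mod_sum) auto
  moreover have "(\<Sum>y\<in>S. g y * (if z = y then 1 else 0)) = g z" for z
  proof -
    have "(\<Sum>y\<in>S. g y * (if z = y then 1 else 0)) = (\<Sum>y\<in>S. if z = y then g y else 0)"
      by (rule sum.cong) auto
    also have "\<dots> = g z" using assms(1,2) by (auto simp: sum.delta')
    finally show ?thesis .
  qed
  ultimately show ?thesis by (rule supported_mod_cong)
qed

lemma supported_mod_dependent:
  assumes "finite F" and "finite K" and "card F < card K"
    and "\<forall>i\<in>K. supported_mod F (y i)"
  shows "\<exists>c. (\<exists>i\<in>K. c i \<noteq> 0) \<and> (\<lambda>z. \<Sum>i\<in>K. c i * y i z) \<in> I"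
proof -
  obtain h where h: "\<forall>i\<in>K. h i \<in> I \<and> (\<forall>z. z \<notin> F \<longrightarrow> y i z = h i z)"
    using bchoice[OF assms(4)[unfolded supported_mod_def Bex_def]] by blast
  have "\<forall>i\<in>K. \<forall>z. z \<notin> F \<longrightarrow> y i z - h i z = 0" using h by auto
  then obtain c where c: "\<exists>i\<in>K. c i \<noteq> 0" "\<forall>z. (\<Sum>i\<in>K. c i * (y i z - h i z)) = 0"
    using card_support_lt_imp_dependent[OF assms(1-3), of "\<lambda>i z. y i z - h i z"] by blast
  have "(\<lambda>z. \<Sum>i\<in>K. c i * h i z) \<in> I" using sum_mem[OF assms(2)] h by blast
  moreover have "(\<lambda>z. \<Sum>i\<in>K. c i * y i z) = (\<lambda>z. \<Sum>i\<in>K. c i * h i z)"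
  proof
    fix z
    have "(\<Sum>i\<in>K. c i * y i z) - (\<Sum>i\<in>K. c i * h i z) = 0"
      using c(2) by (simp add: right_diff_distrib sum_subtractf)
    then show "(\<Sum>i\<in>K. c i * y i z) = (\<Sum>i\<in>K. c i * h i z)" by simp
  qed
  ultimately show ?thesis using c(1) by metis
qed

lemma supported_mod_dependent_atMost:
  assumes "finite F" and "card F \<le> N" and "\<forall>i\<le>N. supported_mod F (y i)"
  shows "\<exists>c. (\<exists>i\<le>N. c i \<noteq> 0) \<and> (\<lambda>z. \<Sum>i\<le>N. c i * y i z) \<in> I"
proof -
  have "\<exists>c. (\<exists>i\<in>{..N}. c i \<noteq> 0) \<and> (\<lambda>z. \<Sum>i\<le>N. c i * y i z) \<in> I"
    using assms by (intro supported_mod_dependent) auto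
  then show ?thesis by (simp only: bex_simps atMost_iff Bex_def)
qed

lemma supported_mod_funpow:
  assumes "\<sigma> ` X \<subseteq> X"
    and step: "\<And>v. v \<in> X \<Longrightarrow> supported_mod F (\<lambda>z. e v z - c * e (\<sigma> v) z)"
    and "v \<in> X"
  shows "(\<sigma> ^^ t) v \<in> X \<and> supported_mod F (\<lambda>z. e v z - c ^ t * e ((\<sigma> ^^ t) v) z)"
proof (induction t)
  case 0
  show ?case using assms(3) by (auto intro: supported_mod_support)
next
  case (Suc t)
  let ?p = "(\<sigma> ^^ t) v"
  have "supported_mod F (\<lambda>z. (e v z - c ^ t * e ?p z) + c ^ t * (e ?p z - c * e (\<sigma> ?p) z))"
    using Suc step by (intro supported_mod_add supported_mod_scale) auto
  then have "supported_mod F (\<lambda>z. e v z - c ^ Suc t * e ((\<sigma> ^^ Suc t) v) z)"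
    by (rule supported_mod_cong) (simp add: algebra_simps)
  then show ?case using Suc assms(1) by auto
qed

text \<open>If every \<open>e w\<close> is congruent to \<open>c * e (\<sigma> w)\<close> and \<open>c\<close> is not a root of unity, then following
  the orbit of \<open>\<sigma>\<close> to its first repetition \<open>p = \<sigma>\<^sup>t p\<close> gives \<open>(1 - c\<^sup>t) e p \<equiv> 0\<close>.\<close>
lemma supported_mod_orbit:
  assumes "finite X" and "\<sigma> ` X \<subseteq> X" and "\<And>t. t > 0 \<Longrightarrow> c ^ t \<noteq> 1"
    and step: "\<And>v. v \<in> X \<Longrightarrow> supported_mod F (\<lambda>z. e v z - c * e (\<sigma> v) z)"
    and "w \<in> X"
  shows "supported_mod F (e w)"
proof -
  have iterate: "(\<sigma> ^^ t) v \<in> X \<and> supported_mod F (\<lambda>z. e v z - c ^ t * e ((\<sigma> ^^ t) v) z)"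
    if "v \<in> X" for v t
    using supported_mod_funpow[of \<sigma> X F e c v t] assms(2) step that by blast
  define orbit where "orbit t = (\<sigma> ^^ t) w" for t
  have "orbit ` {0..card X} \<subseteq> X" using iterate assms(5) unfolding orbit_def by blast
  then have "card (orbit ` {0..card X}) < card {0..card X}"
    using card_mono[OF assms(1)] by (simp add: le_imp_less_Suc)
  then have "\<not> inj_on orbit {0..card X}" by (rule pigeonhole)
  then obtain s' t' where "s' \<noteq> t'" "orbit s' = orbit t'" by (auto simp: inj_on_def)
  then obtain s t where st: "s < t" "orbit s = orbit t"
    by (metis linorder_neqE_nat)
  define p where "p = orbit s"
  have pX: "p \<in> X" using iterate assms(5) unfolding p_def orbit_def by blast
  have "(\<sigma> ^^ (t - s)) p = (\<sigma> ^^ (t - s + s)) w"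
    unfolding p_def orbit_def by (simp add: funpow_add)
  also have "\<dots> = p" using st unfolding p_def orbit_def by simp
  finally have "supported_mod F (\<lambda>z. e p z - c ^ (t - s) * e p z)"
    using iterate[OF pX, of "t - s"] by simp
  then have "supported_mod F (\<lambda>z. inverse (1 - c ^ (t - s)) * (e p z - c ^ (t - s) * e p z))"
    by (rule supported_mod_scale)
  then have "supported_mod F (e p)"
    by (rule supported_mod_cong) (use assms(3)[of "t - s"] st(1) in \<open>simp add: field_simps\<close>)
  moreover have "supported_mod F (\<lambda>z. e w z - c ^ s * e p z)"
    using iterate assms(5) unfolding p_def orbit_def by blast
  ultimately have "supported_mod F (\<lambda>z. (e w z - c ^ s * e p z) + c ^ s * e p z)"
    by (intro supported_mod_add supported_mod_scale)
  then show ?thesis by (rule supported_mod_cong) simp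
qed

end

lemma Dx_add: "Dx m a l i (\<lambda>z. g z + h z) w = Dx m a l i g w + Dx m a l i h w"
  unfolding Dx_def by (simp add: algebra_simps sum.distrib)

lemma Dx_scale: "Dx m a l i (\<lambda>z. c * g z) w = c * Dx m a l i g w"
  unfolding Dx_def by (simp add: algebra_simps sum_distrib_left)

lemma lincomb_closed_Sk: "lincomb_closed (Sk M)"
proof
  fix f g c
  assume f: "f \<in> Sk M" and g: "g \<in> Sk M"
  have "{z. f z + g z \<noteq> 0} \<subseteq> {z. f z \<noteq> 0} \<union> {z. g z \<noteq> 0}" by auto
  with f g show "(\<lambda>z. f z + g z) \<in> Sk M" unfolding Sk_def by (auto intro: finite_subset)
  have "{z. c * f z \<noteq> 0} \<subseteq> {z. f z \<noteq> 0}" by auto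
  with f show "(\<lambda>z. c * f z) \<in> Sk M" unfolding Sk_def by (auto intro: finite_subset)
qed (simp add: Sk_def)

lemma lincomb_closed_DSk: "lincomb_closed (DSk m a l M)"
proof
  interpret Sk: lincomb_closed "Sk M" by (rule lincomb_closed_Sk)
  fix f g c
  show "(\<lambda>_. 0) \<in> DSk m a l M"
    unfolding DSk_def using Sk.zero_mem by (auto intro!: exI[of _ "\<lambda>_ _. 0"] simp: Dx_def)
  assume "f \<in> DSk m a l M"
  then obtain F where F: "\<forall>i. F i \<in> Sk M" "f = (\<lambda>w. \<Sum>i\<in>UNIV. Dx m a l i (F i) w)"
    unfolding DSk_def by blast
  show "(\<lambda>z. c * f z) \<in> DSk m a l M"
    unfolding DSk_def using F Sk.scale_mem
    by (auto intro!: exI[of _ "\<lambda>i z. c * F i z"] simp: Dx_scale sum_distrib_left)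
  assume "g \<in> DSk m a l M"
  then obtain G where G: "\<forall>i. G i \<in> Sk M" "g = (\<lambda>w. \<Sum>i\<in>UNIV. Dx m a l i (G i) w)"
    unfolding DSk_def by blast
  show "(\<lambda>z. f z + g z) \<in> DSk m a l M"
    unfolding DSk_def using F G Sk.add_mem
    by (auto intro!: exI[of _ "\<lambda>i z. F i z + G i z"] simp: Dx_add sum.distrib)
qed

definition ratfun_of_real :: "real \<Rightarrow> ratfun" where
  "ratfun_of_real r = to_fract [:complex_of_real r:]"

lemma ratfun_of_real_add: "ratfun_of_real (x + y) = ratfun_of_real x + ratfun_of_real y"
  unfolding ratfun_of_real_def by (simp flip: to_fract_add)

lemma ratfun_of_real_mult: "ratfun_of_real (x * y) = ratfun_of_real x * ratfun_of_real y"
  unfolding ratfun_of_real_def by (simp flip: to_fract_mult add: mult_to_poly)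

lemma ratfun_of_real_0 [simp]: "ratfun_of_real 0 = 0"
  by (simp add: ratfun_of_real_def)

lemma ratfun_of_real_sum: "ratfun_of_real (\<Sum>i\<in>S. f i) = (\<Sum>i\<in>S. ratfun_of_real (f i))"
  by (induction S rule: infinite_finite_induct) (simp_all add: ratfun_of_real_add)

lemma ratfun_of_real_of_int [simp]: "ratfun_of_real (of_int k) = of_int k"
proof -
  have "to_fract (of_nat n :: complex poly) = of_nat n" for n
    by (simp add: to_fract_def of_nat_fract)
  then have "to_fract (of_int k :: complex poly) = of_int k"
    by (cases k rule: int_cases) (simp_all only: of_int_of_nat_eq of_int_minus to_fract_uminus)
  then show ?thesis unfolding ratfun_of_real_def by (simp add: of_int_poly)
qed

lemma ratfun_of_real_of_nat [simp]: "ratfun_of_real (of_nat n) = of_nat n"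
  using ratfun_of_real_of_int[of "int n"] by simp

lemma ratfun_of_real_1 [simp]: "ratfun_of_real 1 = 1"
  using ratfun_of_real_of_nat[of 1] by simp

lemma ratfun_of_real_eq_0_iff: "ratfun_of_real r = 0 \<longleftrightarrow> r = 0"
  by (simp add: ratfun_of_real_def)

lemma ratfun_of_nat_eq_0_iff [simp]: "(of_nat n :: ratfun) = 0 \<longleftrightarrow> n = 0"
  by (metis of_nat_eq_0_iff ratfun_of_real_eq_0_iff ratfun_of_real_of_nat)

lemma lam_power_ne_1: "t > 0 \<Longrightarrow> lam ^ t \<noteq> 1"
proof
  assume "t > 0" and "lam ^ t = 1"
  have "lam ^ t = to_fract ([:0, 1:] ^ t)"
    by (induction t) (simp_all add: lam_def to_fract_def One_fract_def)
  with \<open>lam ^ t = 1\<close> have "[:0, 1:] ^ t = (1 :: complex poly)"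
    by (metis to_fract_1 to_fract_eq_iff)
  then have "poly ([:0, 1:] ^ t) 0 = (1 :: complex)" by simp
  with \<open>t > 0\<close> show False by (simp add: power_0_left)
qed

lemma ratfun_deriv_0 [simp]: "ratfun_deriv 0 = 0"
  unfolding ratfun_deriv_def
proof (rule the_equality)
  fix s :: ratfun
  assume "\<forall>p q. q \<noteq> 0 \<longrightarrow> 0 = Fract p q \<longrightarrow> s = Fract (pderiv p * q - p * pderiv q) (q * q)"
  from this[rule_format, of 1 0] have "s = Fract (pderiv 0 * 1 - 0 * pderiv 1) (1 * 1)"
    by (simp add: Zero_fract_def)
  then show "s = 0" by (simp add: Zero_fract_def)
qed (auto simp: Zero_fract_def eq_fract)

lemma ratfun_of_real_lattice: "lattice_pt x \<Longrightarrow> of_int \<lfloor>x $ i\<rfloor> = ratfun_of_real (x $ i)"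
  unfolding lattice_pt_def by (metis Ints_cases floor_of_int ratfun_of_real_of_int)

lemma linear_axis_expansion:
  fixes \<phi> :: "real ^ 'n \<Rightarrow> real"
  assumes "linear \<phi>"
  shows "\<phi> x = (\<Sum>i\<in>UNIV. x $ i * \<phi> (axis i 1))"
proof -
  have "\<phi> x = \<phi> (\<Sum>i\<in>UNIV. x $ i *\<^sub>R axis i 1)"
    using basis_expansion[of x] by (simp add: scalar_mult_eq_scaleR)
  then show ?thesis using assms by (simp add: linear_sum linear_scale)
qed

lemma lattice_sum_floor:
  fixes \<phi> :: "real ^ 'n \<Rightarrow> real"
  assumes "linear \<phi>" and "lattice_pt x"
  shows "(\<Sum>i\<in>UNIV. ratfun_of_real (\<phi> (axis i 1)) * of_int \<lfloor>x $ i\<rfloor>) = ratfun_of_real (\<phi> x)"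
  using assms by (simp add: ratfun_of_real_lattice linear_axis_expansion[of \<phi> x]
      ratfun_of_real_sum ratfun_of_real_mult mult.commute)

lemma monom_diff: "monom w (z - v) = monom (w + v) z"
  unfolding monom_def by (auto simp: algebra_simps)

lemma Dx_monom:
  "Dx m a l i (monom w) z = of_int \<lfloor>w $ i\<rfloor> * monom w z
    + (\<Sum>j\<in>{1..m}. of_nat (l j) * of_int \<lfloor>a j $ i\<rfloor> * monom (w + a j) z)
    - of_nat (l 0) * lam * of_int \<lfloor>a 0 $ i\<rfloor> * monom (w + a 0) z"
proof -
  have "of_int \<lfloor>z $ i\<rfloor> * monom w z = of_int \<lfloor>w $ i\<rfloor> * monom w z"
    by (simp add: monom_def)
  then show ?thesis by (simp add: Dx_def monom_diff)
qed

lemma sum_Dx_monom: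
  fixes \<phi> :: "real ^ 'n \<Rightarrow> real"
  assumes "linear \<phi>" and "lattice_pt w" and "\<forall>j\<in>{0..m}. lattice_pt (a j)"
  shows "(\<Sum>i\<in>UNIV. Dx m a l i (\<lambda>v. ratfun_of_real (\<phi> (axis i 1)) * monom w v) z) =
    ratfun_of_real (\<phi> w) * monom w z
    + (\<Sum>j\<in>{1..m}. of_nat (l j) * ratfun_of_real (\<phi> (a j)) * monom (w + a j) z)
    - of_nat (l 0) * lam * ratfun_of_real (\<phi> (a 0)) * monom (w + a 0) z"
proof -
  define \<psi> where "\<psi> i = ratfun_of_real (\<phi> (axis i 1))" for i
  have euler: "(\<Sum>i\<in>UNIV. \<psi> i * of_int \<lfloor>x $ i\<rfloor>) = ratfun_of_real (\<phi> x)" if "lattice_pt x" for x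
    unfolding \<psi>_def using assms(1) that by (rule lattice_sum_floor)
  have "(\<Sum>i\<in>UNIV. Dx m a l i (\<lambda>v. \<psi> i * monom w v) z) =
      (\<Sum>i\<in>UNIV. \<psi> i * of_int \<lfloor>w $ i\<rfloor>) * monom w z
      + (\<Sum>j\<in>{1..m}. of_nat (l j) * (\<Sum>i\<in>UNIV. \<psi> i * of_int \<lfloor>a j $ i\<rfloor>) * monom (w + a j) z)
      - of_nat (l 0) * lam * (\<Sum>i\<in>UNIV. \<psi> i * of_int \<lfloor>a 0 $ i\<rfloor>) * monom (w + a 0) z"
    by (simp add: Dx_scale Dx_monom algebra_simps sum.distrib sum_subtractf sum_distrib_left
        sum_distrib_right sum.swap[of _ UNIV])
  also have "\<dots> = ratfun_of_real (\<phi> w) * monom w z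
      + (\<Sum>j\<in>{1..m}. of_nat (l j) * ratfun_of_real (\<phi> (a j)) * monom (w + a j) z)
      - of_nat (l 0) * lam * ratfun_of_real (\<phi> (a 0)) * monom (w + a 0) z"
    using assms(2,3) by (simp add: euler)
  finally show ?thesis unfolding \<psi>_def .
qed

lemma finite_lattice_norm_le: "finite {w :: real ^ 'n. lattice_pt w \<and> norm w \<le> B}"
proof (rule finite_subset)
  show "{w :: real ^ 'n. lattice_pt w \<and> norm w \<le> B} \<subseteq>
      vec_lambda ` (UNIV \<rightarrow>\<^sub>E {k \<in> \<int>. \<bar>k\<bar> \<le> B})"
  proof
    fix w :: "real ^ 'n"
    assume w: "w \<in> {w. lattice_pt w \<and> norm w \<le> B}"
    have "w $ i \<in> {k \<in> \<int>. \<bar>k\<bar> \<le> B}" for i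
      using w component_le_norm_cart[of w i] unfolding lattice_pt_def by simp
    then have "vec_nth w \<in> UNIV \<rightarrow>\<^sub>E {k \<in> \<int>. \<bar>k\<bar> \<le> B}" by blast
    then show "w \<in> vec_lambda ` (UNIV \<rightarrow>\<^sub>E {k \<in> \<int>. \<bar>k\<bar> \<le> B})"
      by (rule image_eqI[rotated]) simp
  qed
qed (intro finite_imageI finite_PiE finite_abs_int_segment, simp_all)

lemma Dlam_power_monom_support:
  "(Dlam a l ^^ i) (monom u) z \<noteq> 0 \<Longrightarrow> z \<in> (\<lambda>s. u + of_nat s *\<^sub>R a 0) ` {..i}"
proof (induction i arbitrary: z)
  case 0
  then show ?case by (simp add: monom_def split: if_splits)
next
  case (Suc i)
  let ?g = "(Dlam a l ^^ i) (monom u)"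
  have "(Dlam a l ^^ Suc i) (monom u) z = ratfun_deriv (?g z) - of_nat (l 0) * ?g (z - a 0)"
    by (simp only: funpow.simps comp_apply) (simp only: Dlam_def)
  with Suc.prems have "?g z \<noteq> 0 \<or> ?g (z - a 0) \<noteq> 0" by auto
  then show ?case
  proof
    assume "?g z \<noteq> 0"
    with Suc.IH show ?thesis by fastforce
  next
    assume "?g (z - a 0) \<noteq> 0"
    then obtain s where "s \<le> i" "z - a 0 = u + of_nat s *\<^sub>R a 0" using Suc.IH by blast
    then have "Suc s \<le> Suc i" "z = u + of_nat (Suc s) *\<^sub>R a 0" by (simp_all add: algebra_simps)
    then show ?thesis by blast
  qed
qed

locale dwork_family =
  fixes m :: nat and a :: "nat \<Rightarrow> real ^ 'n" and l :: "nat \<Rightarrow> nat"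
    and Ck :: "(real ^ 'n) set"
  assumes lat: "\<forall>j\<in>{0..m}. lattice_pt (a j)"
    and inj: "inj_on a {1..m}"
    and indep: "independent (a ` {1..m})"
    and lpos: "\<forall>j\<in>{0..m}. 0 < l j"
    and rel: "real (l 0) *\<^sub>R a 0 = (\<Sum>j\<in>{1..m}. real (l j) *\<^sub>R a j)"
    and lsum: "l 0 = (\<Sum>j\<in>{1..m}. l j)"
    and coset: "\<exists>v\<in>VZ m a. Ck = (\<lambda>w. v + w) ` ZAplus m a"
begin

abbreviation Mk :: "(real ^ 'n) set" where
  "Mk \<equiv> VZ m a \<inter> coneA m a \<inter> Ck"

sublocale lincomb_closed "DSk m a l Mk"
  by (rule lincomb_closed_DSk)

definition coord :: "nat \<Rightarrow> real ^ 'n \<Rightarrow> real" where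
  "coord j = (SOME \<phi>. linear \<phi> \<and> (\<forall>k\<in>{1..m}. \<phi> (a k) = (if k = j then 1 else 0)))"

lemma coord_exists:
  "\<exists>\<phi> :: real ^ 'n \<Rightarrow> real. linear \<phi> \<and> (\<forall>k\<in>{1..m}. \<phi> (a k) = (if k = j then 1 else 0))"
proof -
  obtain \<phi> :: "real ^ 'n \<Rightarrow> real"
    where "linear \<phi>"
      and \<phi>: "\<forall>x\<in>a ` {1..m}. \<phi> x = (if j \<in> {1..m} \<and> x = a j then 1 else 0)"
    using linear_independent_extend[OF indep, of "\<lambda>x. if j \<in> {1..m} \<and> x = a j then 1 else 0"]
    by blast
  moreover have "\<phi> (a k) = (if k = j then 1 else 0)" if "k \<in> {1..m}" for k
  proof -
    have "j \<in> {1..m} \<and> a k = a j \<longleftrightarrow> k = j"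
      using inj that by (auto dest: inj_onD)
    then show ?thesis using \<phi> that by simp
  qed
  ultimately show ?thesis by blast
qed

lemma coord_linear: "linear (coord j)"
  and coord_a: "k \<in> {1..m} \<Longrightarrow> coord j (a k) = (if k = j then 1 else 0)"
  using someI_ex[OF coord_exists[of j]] unfolding coord_def by auto

lemmas coord_add = linear_add[OF coord_linear]
  and coord_diff = linear_diff[OF coord_linear]
  and coord_scale = linear_scale[OF coord_linear]
  and coord_sum = linear_sum[OF coord_linear]
  and coord_0 = linear_0[OF coord_linear]

lemma coord_sum_a:
  assumes "j \<in> {1..m}"
  shows "coord j (\<Sum>k\<in>{1..m}. v k *\<^sub>R a k) = v j"
proof -
  have "coord j (\<Sum>k\<in>{1..m}. v k *\<^sub>R a k) = (\<Sum>k\<in>{1..m}. v k * coord j (a k))"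
    by (simp add: coord_sum coord_scale)
  also have "\<dots> = (\<Sum>k\<in>{1..m}. if k = j then v k else 0)"
    by (rule sum.cong) (simp_all add: coord_a)
  finally show ?thesis using assms by simp
qed

lemma l0_pos: "0 < l 0"
  using lpos by simp

lemma coord_a0: "j \<in> {1..m} \<Longrightarrow> coord j (a 0) = real (l j) / real (l 0)"
  using coord_sum_a[of j "\<lambda>k. real (l k)"] coord_scale[of j "real (l 0)" "a 0"] rel l0_pos
  by (simp add: field_simps)

lemma span_coord_expansion:
  assumes "w \<in> span (a ` {1..m})"
  shows "w = (\<Sum>k\<in>{1..m}. coord k w *\<^sub>R a k)"
proof -
  obtain v where "w = (\<Sum>x\<in>a ` {1..m}. v x *\<^sub>R x)"
    using assms span_finite[of "a ` {1..m}"] by auto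
  also have "\<dots> = (\<Sum>k\<in>{1..m}. v (a k) *\<^sub>R a k)"
    using sum.reindex[OF inj, of "\<lambda>x. v x *\<^sub>R x"] by simp
  finally have w: "w = (\<Sum>k\<in>{1..m}. v (a k) *\<^sub>R a k)" .
  have "coord k w = v (a k)" if "k \<in> {1..m}" for k
    using coord_sum_a[OF that, of "\<lambda>k. v (a k)"] w by simp
  then have "(\<Sum>k\<in>{1..m}. v (a k) *\<^sub>R a k) = (\<Sum>k\<in>{1..m}. coord k w *\<^sub>R a k)"
    by (intro sum.cong) auto
  with w show ?thesis by simp
qed

definition weight :: "real ^ 'n \<Rightarrow> real" where
  "weight w = (\<Sum>j\<in>{1..m}. coord j w)"

lemma weight_add: "weight (x + y) = weight x + weight y"
  unfolding weight_def by (simp add: coord_add sum.distrib)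

lemma weight_diff: "weight (x - y) = weight x - weight y"
  unfolding weight_def by (simp add: coord_diff sum_subtractf)

lemma weight_a: "k \<in> {1..m} \<Longrightarrow> weight (a k) = 1"
  unfolding weight_def by (simp add: coord_a)

lemma weight_a0: "weight (a 0) = 1"
proof -
  have "weight (a 0) = (\<Sum>j\<in>{1..m}. real (l j)) / real (l 0)"
    unfolding weight_def by (simp add: coord_a0 sum_divide_distrib)
  also have "(\<Sum>j\<in>{1..m}. real (l j)) = real (l 0)"
    by (simp add: lsum)
  finally show ?thesis using l0_pos by simp
qed

lemma a_in_span: "j \<in> {0..m} \<Longrightarrow> a j \<in> span (a ` {1..m})"
proof (cases "j = 0")
  case True
  have "a 0 = (1 / real (l 0)) *\<^sub>R (\<Sum>k\<in>{1..m}. real (l k) *\<^sub>R a k)"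
    unfolding rel[symmetric] using l0_pos by simp
  also have "\<dots> \<in> span (a ` {1..m})"
    by (intro span_mul span_sum span_base) auto
  finally show ?thesis using True by simp
qed (auto intro: span_base)

lemma a_in_VZ: "j \<in> {0..m} \<Longrightarrow> a j \<in> VZ m a"
  using a_in_span lat unfolding VZ_def by auto

lemma VZ_add: "x \<in> VZ m a \<Longrightarrow> y \<in> VZ m a \<Longrightarrow> x + y \<in> VZ m a"
  unfolding VZ_def lattice_pt_def by (auto intro: span_add)

lemma VZ_diff: "x \<in> VZ m a \<Longrightarrow> y \<in> VZ m a \<Longrightarrow> x - y \<in> VZ m a"
  unfolding VZ_def lattice_pt_def by (auto intro: span_diff)

lemma Ck_add_int_a: 
  assumes "x \<in> Ck" and "k \<in> {0..m}"
  shows "x + of_int e *\<^sub>R a k \<in> Ck"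
proof -
  obtain v z where x: "x = v + (\<Sum>j\<in>{0..m}. of_int (z j) *\<^sub>R a j)"
    and Ck: "Ck = (\<lambda>w. v + w) ` ZAplus m a"
    using assms(1) coset unfolding ZAplus_def by auto
  define z' where "z' j = z j + (if j = k then e else 0)" for j
  have "(\<Sum>j\<in>{0..m}. of_int (z' j) *\<^sub>R a j) =
      (\<Sum>j\<in>{0..m}. of_int (z j) *\<^sub>R a j) + (\<Sum>j\<in>{0..m}. if j = k then of_int e *\<^sub>R a j else 0)"
    unfolding z'_def by (subst sum.distrib[symmetric], rule sum.cong) (auto simp: scaleR_add_left)
  then have "x + of_int e *\<^sub>R a k = v + (\<Sum>j\<in>{0..m}. of_int (z' j) *\<^sub>R a j)"
    using assms(2) by (simp add: x)
  then show ?thesis unfolding Ck ZAplus_def by blast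
qed

lemma Ck_diff_a: "x \<in> Ck \<Longrightarrow> k \<in> {0..m} \<Longrightarrow> x - a k \<in> Ck"
  using Ck_add_int_a[of x k "-1"] by simp

lemma coneA_eq: "coneA m a = {w \<in> span (a ` {1..m}). \<forall>j\<in>{1..m}. 0 \<le> coord j w}"
proof
  let ?K = "span (a ` {1..m}) \<inter> (\<Inter>j\<in>{1..m}. {w. 0 \<le> coord j w})"
  have "closed {w. 0 \<le> coord j w}" for j
    using coord_linear by (intro closed_Collect_le continuous_intros linear_continuous_on)
      (simp_all add: linear_conv_bounded_linear)
  then have "closed ?K" by (intro closed_Int closed_span closed_INT) auto
  moreover have "convex_cone ?K"
    unfolding convex_cone_iff
    by (auto intro: span_zero span_add span_mul simp: coord_0 coord_add coord_scale)
  moreover have "a ` {1..m} \<subseteq> ?K" by (auto intro: span_base simp: coord_a)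
  ultimately have "coneA m a \<subseteq> ?K"
    unfolding coneA_def by (intro closure_minimal hull_minimal)
  then show "coneA m a \<subseteq> {w \<in> span (a ` {1..m}). \<forall>j\<in>{1..m}. 0 \<le> coord j w}" by blast
next
  show "{w \<in> span (a ` {1..m}). \<forall>j\<in>{1..m}. 0 \<le> coord j w} \<subseteq> coneA m a"
  proof clarify
    fix w assume w: "w \<in> span (a ` {1..m})" and nonneg: "\<forall>j\<in>{1..m}. 0 \<le> coord j w"
    have "coord k w *\<^sub>R a k \<in> convex_cone hull (a ` {1..m})" if "k \<in> {1..m}" for k
      using nonneg that
      by (intro convex_cone_scaleR[OF convex_cone_convex_cone_hull] hull_inc) auto
    then have "(\<Sum>k\<in>{1..m}. coord k w *\<^sub>R a k) \<in> convex_cone hull (a ` {1..m})"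
      by (intro convex_cone_sum[OF convex_cone_convex_cone_hull]) auto
    then show "w \<in> coneA m a"
      unfolding coneA_def using span_coord_expansion[OF w] closure_subset by auto
  qed
qed

lemma coord_nonneg: "w \<in> coneA m a \<Longrightarrow> j \<in> {1..m} \<Longrightarrow> 0 \<le> coord j w"
  unfolding coneA_eq by blast

text \<open>Moving from a point with \<open>coord j u = 0\<close> in the direction \<open>-a j\<close> leaves the cone
  while staying in its span.\<close>
lemma coord_pos_rel_interior:
  assumes u: "u \<in> rel_interior (coneA m a)" and j: "j \<in> {1..m}"
  shows "0 < coord j u"
proof (rule ccontr)
  assume "\<not> 0 < coord j u"
  obtain e where uC: "u \<in> coneA m a" and "e > 0"
    and ball: "cball u e \<inter> affine hull (coneA m a) \<subseteq> coneA m a"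
    using u by (auto simp: mem_rel_interior_cball)
  have "coord j u = 0" using coord_nonneg[OF uC j] \<open>\<not> 0 < coord j u\<close> by simp
  have "a j \<noteq> 0" using indep j by (metis dependent_zero image_eqI)
  define t where "t = e / norm (a j)"
  have "t > 0" unfolding t_def using \<open>e > 0\<close> \<open>a j \<noteq> 0\<close> by simp
  define p where "p = u - t *\<^sub>R a j"
  have "p \<in> cball u e"
    unfolding p_def t_def using \<open>a j \<noteq> 0\<close> \<open>e > 0\<close> by (simp add: dist_norm)
  moreover have "p \<in> affine hull (coneA m a)"
  proof -
    have "0 \<in> coneA m a" unfolding coneA_eq by (simp add: span_zero coord_0)
    then have "affine hull (coneA m a) = span (coneA m a)"
      by (intro affine_hull_span_0 hull_inc)
    moreover have "a j \<in> coneA m a"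
      using j unfolding coneA_eq by (auto intro: span_base simp: coord_a)
    ultimately show ?thesis
      unfolding p_def using uC by (simp add: span_diff span_mul span_base)
  qed
  ultimately have "0 \<le> coord j p" using ball coord_nonneg j by blast
  moreover have "coord j p = - t"
    unfolding p_def using \<open>coord j u = 0\<close> j by (simp add: coord_diff coord_scale coord_a)
  ultimately show False using \<open>t > 0\<close> by simp
qed

lemma finite_weight_le: "finite {w \<in> VZ m a \<inter> coneA m a. weight w \<le> d}"
proof (rule finite_subset)
  define A where "A = (\<Sum>k\<in>{1..m}. norm (a k))"
  show "{w \<in> VZ m a \<inter> coneA m a. weight w \<le> d} \<subseteq> {w. lattice_pt w \<and> norm w \<le> d * A}"
  proof clarify
    fix w assume w: "w \<in> VZ m a" "w \<in> coneA m a" "weight w \<le> d"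
    have "norm w = norm (\<Sum>k\<in>{1..m}. coord k w *\<^sub>R a k)"
      using span_coord_expansion w(1) unfolding VZ_def by auto
    also have "\<dots> \<le> (\<Sum>k\<in>{1..m}. norm (coord k w *\<^sub>R a k))"
      by (rule norm_sum)
    also have "\<dots> = (\<Sum>k\<in>{1..m}. coord k w * norm (a k))"
      using coord_nonneg[OF w(2)] by (intro sum.cong) auto
    also have "\<dots> \<le> (\<Sum>k\<in>{1..m}. coord k w * A)"
      unfolding A_def using coord_nonneg[OF w(2)]
      by (intro sum_mono mult_left_mono member_le_sum) auto
    also have "\<dots> = weight w * A" unfolding weight_def by (simp add: sum_distrib_right)
    also have "\<dots> \<le> d * A" using w(3) by (intro mult_right_mono) (auto simp: A_def sum_nonneg)
    finally show "lattice_pt w \<and> norm w \<le> d * A" using w(1) unfolding VZ_def by simp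
  qed
qed (rule finite_lattice_norm_le)

definition interior_pts :: "(real ^ 'n) set" where
  "interior_pts = {w \<in> VZ m a \<inter> Ck. \<forall>j\<in>{1..m}. 0 < coord j w}"

lemma interior_pts_subset: "interior_pts \<subseteq> Mk"
  unfolding interior_pts_def coneA_eq VZ_def by (auto intro: less_imp_le)

lemma rel_interior_in_interior_pts: "u \<in> Mk \<Longrightarrow> u \<in> rel_interior (coneA m a) \<Longrightarrow> u \<in> interior_pts"
  unfolding interior_pts_def using coord_pos_rel_interior by auto

lemma finite_interior_pts_weight_le: "finite {w \<in> interior_pts. weight w \<le> d}"
  using interior_pts_subset by (intro finite_subset[OF _ finite_weight_le]) auto

lemma Bk_int_eq: "Bk_int m a Ck = {w \<in> interior_pts. \<forall>j\<in>{1..m}. coord j w < 1}"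
proof -
  have "(\<exists>v. (\<forall>j\<in>{1..m}. 0 < v j \<and> v j < 1) \<and> w = (\<Sum>j\<in>{1..m}. v j *\<^sub>R a j)) \<longleftrightarrow>
      (\<forall>j\<in>{1..m}. 0 < coord j w \<and> coord j w < 1)" if "w \<in> VZ m a" for w
  proof
    assume "\<exists>v. (\<forall>j\<in>{1..m}. 0 < v j \<and> v j < 1) \<and> w = (\<Sum>j\<in>{1..m}. v j *\<^sub>R a j)"
    then obtain v where "\<forall>j\<in>{1..m}. 0 < v j \<and> v j < 1" and "w = (\<Sum>j\<in>{1..m}. v j *\<^sub>R a j)"
      by blast
    then show "\<forall>j\<in>{1..m}. 0 < coord j w \<and> coord j w < 1"
      using coord_sum_a[of _ v] by simp
  next
    assume "\<forall>j\<in>{1..m}. 0 < coord j w \<and> coord j w < 1"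
    moreover have "w = (\<Sum>j\<in>{1..m}. coord j w *\<^sub>R a j)"
      using that span_coord_expansion unfolding VZ_def by blast
    ultimately show "\<exists>v. (\<forall>j\<in>{1..m}. 0 < v j \<and> v j < 1) \<and> w = (\<Sum>j\<in>{1..m}. v j *\<^sub>R a j)"
      by (intro exI[of _ "\<lambda>j. coord j w"]) blast
  qed
  then show ?thesis unfolding Bk_int_def interior_pts_def by auto
qed

lemma finite_Bk_int: "finite (Bk_int m a Ck)"
proof (rule finite_subset)
  show "Bk_int m a Ck \<subseteq> {w \<in> interior_pts. weight w \<le> real m}"
  proof clarify
    fix w assume "w \<in> Bk_int m a Ck"
    then have "w \<in> interior_pts" and "\<forall>j\<in>{1..m}. coord j w \<le> 1"
      unfolding Bk_int_eq by auto
    then show "w \<in> interior_pts \<and> weight w \<le> real m"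
      unfolding weight_def using sum_mono[of "{1..m}" "\<lambda>j. coord j w" "\<lambda>_. 1"] by simp
  qed
qed (rule finite_interior_pts_weight_le)

lemma coord_relation_mem:
  assumes j: "j \<in> {1..m}" and w: "w \<in> Mk"
  shows "(\<lambda>z. ratfun_of_real (coord j w) * monom w z + of_nat (l j) * monom (w + a j) z
      - of_nat (l j) * lam * monom (w + a 0) z) \<in> DSk m a l Mk"
proof -
  define G where "G i = (\<lambda>v. ratfun_of_real (coord j (axis i 1)) * monom w v)" for i
  have G: "G i \<in> Sk Mk" for i
    using w unfolding G_def Sk_def monom_def by (auto intro: finite_subset[of _ "{w}"])
  have sum_G: "(\<Sum>i\<in>UNIV. Dx m a l i (G i) z) = ratfun_of_real (coord j w) * monom w z
      + of_nat (l j) * monom (w + a j) z - of_nat (l j) * lam * monom (w + a 0) z" for z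
  proof -
    have "(\<Sum>k\<in>{1..m}. of_nat (l k) * ratfun_of_real (coord j (a k)) * monom (w + a k) z)
        = (\<Sum>k\<in>{1..m}. if k = j then of_nat (l k) * monom (w + a k) z else 0)"
      by (rule sum.cong) (simp_all add: coord_a)
    also have "\<dots> = of_nat (l j) * monom (w + a j) z" using j by simp
    moreover have "of_nat (l 0) * ratfun_of_real (coord j (a 0)) = (of_nat (l j) :: ratfun)"
      using j l0_pos by (simp add: coord_a0 flip: ratfun_of_real_mult ratfun_of_real_of_nat)
    moreover have "lattice_pt w" using w unfolding VZ_def by simp
    ultimately show ?thesis
      unfolding G_def using sum_Dx_monom[OF coord_linear _ lat, where w = w and l = l and z = z]
      by (simp add: ac_simps)
  qed
  show ?thesis
    unfolding DSk_def by (intro CollectI exI[of _ G] conjI) (simp_all add: G sum_G)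
qed

lemma shift_a0_in_interior_pts:
  assumes u: "u \<in> Mk" and "0 < s \<or> u \<in> interior_pts"
  shows "u + of_nat s *\<^sub>R a 0 \<in> interior_pts"
proof -
  have "of_nat s *\<^sub>R a 0 \<in> VZ m a"
    using a_in_VZ[of 0] unfolding VZ_def lattice_pt_def by (auto intro: span_mul)
  then have "u + of_nat s *\<^sub>R a 0 \<in> VZ m a" using u by (intro VZ_add) auto
  moreover have "u + of_nat s *\<^sub>R a 0 \<in> Ck"
    using u Ck_add_int_a[of u 0 "int s"] by simp
  moreover have "0 < coord k (u + of_nat s *\<^sub>R a 0)" if k: "k \<in> {1..m}" for k
  proof -
    have eq: "coord k (u + of_nat s *\<^sub>R a 0) = coord k u + real s * (real (l k) / real (l 0))"
      using k by (simp add: coord_add coord_scale coord_a0)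
    have "0 \<le> real s * (real (l k) / real (l 0))" by simp
    moreover have "0 < real s * (real (l k) / real (l 0))" if "0 < s"
      using lpos k that by (intro mult_pos_pos) auto
    moreover have "0 \<le> coord k u" using u k by (auto intro: coord_nonneg)
    moreover have "0 < s \<or> 0 < coord k u" using assms(2) k unfolding interior_pts_def by auto
    ultimately show ?thesis unfolding eq by linarith
  qed
  ultimately show ?thesis unfolding interior_pts_def by blast
qed

text \<open>For \<open>v\<close> outside the parallelepiped, \<open>coord j v \<ge> 1\<close> for some \<open>j\<close>, and the relation for
  \<open>x\<^sup>v\<^sup>-\<^sup>a\<^sup>j\<close> trades \<open>x\<^sup>v\<close> for \<open>\<lambda> x\<^sup>v\<^sup>-\<^sup>a\<^sup>j\<^sup>+\<^sup>a\<^sup>0\<close> of the same weight, up to a multiple of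
  \<open>x\<^sup>v\<^sup>-\<^sup>a\<^sup>j\<close>, which has smaller weight. Inside the parallelepiped, \<open>v' = v\<close> will do.\<close>
lemma reduction_step:
  assumes v: "v \<in> interior_pts"
    and lower: "\<And>y. y \<in> interior_pts \<Longrightarrow> weight y < weight v \<Longrightarrow> supported_mod (Bk_int m a Ck) (monom y)"
  shows "\<exists>v'\<in>interior_pts. weight v' = weight v \<and>
    supported_mod (Bk_int m a Ck) (\<lambda>z. monom v z - lam * monom v' z)"
proof (cases "v \<in> Bk_int m a Ck")
  case True
  then have "supported_mod (Bk_int m a Ck) (\<lambda>z. monom v z - lam * monom v z)"
    by (intro supported_mod_support) (auto simp: monom_def split: if_splits)
  then show ?thesis using v by blast
next
  case False
  then obtain j where j: "j \<in> {1..m}" "1 \<le> coord j v"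
    using v unfolding Bk_int_eq by (auto simp: not_less)
  have v_pos: "0 < coord k v" if "k \<in> {1..m}" for k
    using v that unfolding interior_pts_def by auto
  define w where "w = v - a j"
  define v' where "v' = w + a 0"
  have coord_w: "coord k w = coord k v - (if k = j then 1 else 0)" if "k \<in> {1..m}" for k
    unfolding w_def using that j by (simp add: coord_diff coord_a)
  have w_VZ: "w \<in> VZ m a" and w_Ck: "w \<in> Ck"
    using v j VZ_diff[OF _ a_in_VZ[of j]] Ck_diff_a[of v j]
    unfolding w_def interior_pts_def by auto
  have w_coords: "0 \<le> coord k w" if "k \<in> {1..m}" for k
    using coord_w[OF that] v_pos[OF that] j by auto
  have w_M: "w \<in> Mk" using w_VZ w_Ck w_coords unfolding coneA_eq VZ_def by auto
  have "v' \<in> interior_pts"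
    unfolding v'_def using shift_a0_in_interior_pts[OF w_M, of 1] by simp
  moreover have "weight v' = weight v"
    unfolding v'_def w_def using j by (simp add: weight_add weight_diff weight_a weight_a0)
  moreover have lower_term: "supported_mod (Bk_int m a Ck) (\<lambda>z. ratfun_of_real (coord j w) * monom w z)"
  proof (cases "coord j w = 0")
    case True
    then show ?thesis by (auto intro: supported_mod_support)
  next
    case False
    have "0 < coord k w" if "k \<in> {1..m}" for k
      using False coord_w[OF that] v_pos[OF that] w_coords[OF that] by (cases "k = j") auto
    then have "w \<in> interior_pts" using w_VZ w_Ck unfolding interior_pts_def by blast
    moreover have "weight w < weight v"
      unfolding w_def using j by (simp add: weight_diff weight_a)
    ultimately show ?thesis using lower by (intro supported_mod_scale)
  qed
  moreover have "supported_mod (Bk_int m a Ck) (\<lambda>z. monom v z - lam * monom v' z)"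
  proof -
    have "(\<lambda>z. ratfun_of_real (coord j w) * monom w z + of_nat (l j) * monom v z
        - of_nat (l j) * lam * monom v' z) \<in> DSk m a l Mk"
      using coord_relation_mem[OF j(1) w_M] unfolding v'_def w_def by simp
    then have "supported_mod (Bk_int m a Ck) (\<lambda>z. inverse (of_nat (l j)) *
        ((ratfun_of_real (coord j w) * monom w z + of_nat (l j) * monom v z
          - of_nat (l j) * lam * monom v' z) + (- 1) * (ratfun_of_real (coord j w) * monom w z)))"
      by (intro supported_mod_scale supported_mod_add supported_mod_mem lower_term)
    then show ?thesis
      by (rule supported_mod_cong) (use lpos j in \<open>simp add: field_simps\<close>)
  qed
  ultimately show ?thesis by blast
qed

text \<open>Within one weight level, \<open>reduction_step\<close> gives a self-map \<open>\<sigma>\<close>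
  with \<open>x\<^sup>v \<equiv> \<lambda> x\<^sup>\<sigma>\<^sup>v\<close>, and \<open>\<lambda>\<close> is not a root of unity.\<close>
lemma interior_monom_supported:
  assumes "w \<in> interior_pts"
  shows "supported_mod (Bk_int m a Ck) (monom w)"
proof (rule finite_sublevel_induct[of interior_pts weight, OF _ _ assms])
  show "finite {y \<in> interior_pts. weight y < weight x}" for x
    by (rule finite_subset[OF _ finite_interior_pts_weight_le[of "weight x"]]) auto
next
  fix x assume x: "x \<in> interior_pts"
    and lower: "\<And>y. y \<in> interior_pts \<Longrightarrow> weight y < weight x \<Longrightarrow> supported_mod (Bk_int m a Ck) (monom y)"
  define X where "X = {v \<in> interior_pts. weight v = weight x}"
  have "\<forall>v\<in>X. \<exists>v'. v' \<in> X \<and> supported_mod (Bk_int m a Ck) (\<lambda>z. monom v z - lam * monom v' z)"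
  proof
    fix v assume "v \<in> X"
    then have v: "v \<in> interior_pts" and "weight v = weight x" unfolding X_def by auto
    with reduction_step[OF v lower[folded \<open>weight v = weight x\<close>]]
    show "\<exists>v'. v' \<in> X \<and> supported_mod (Bk_int m a Ck) (\<lambda>z. monom v z - lam * monom v' z)"
      unfolding X_def by auto
  qed
  from bchoice[OF this] obtain \<sigma> where \<sigma>: "\<forall>v\<in>X. \<sigma> v \<in> X \<and>
      supported_mod (Bk_int m a Ck) (\<lambda>z. monom v z - lam * monom (\<sigma> v) z)"
    by blast
  have "finite X"
    unfolding X_def by (rule finite_subset[OF _ finite_interior_pts_weight_le[of "weight x"]]) auto
  moreover have "\<sigma> ` X \<subseteq> X" using \<sigma> by blast
  moreover have "x \<in> X" using x unfolding X_def by simp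
  ultimately show "supported_mod (Bk_int m a Ck) (monom x)"
    using supported_mod_orbit[of X \<sigma> lam "Bk_int m a Ck" monom x] \<sigma> lam_power_ne_1 by blast
qed

lemma Dlam_power_supported:
  assumes u: "u \<in> Mk" and "Bk_int m a Ck \<subseteq> F" and "u \<in> interior_pts \<or> u \<in> F"
  shows "supported_mod F ((Dlam a l ^^ i) (monom u))"
proof (rule supported_mod_finite_support)
  show "finite ((\<lambda>s. u + of_nat s *\<^sub>R a 0) ` {..i})" by simp
  show "z \<in> (\<lambda>s. u + of_nat s *\<^sub>R a 0) ` {..i}" if "(Dlam a l ^^ i) (monom u) z \<noteq> 0" for z
    using that by (rule Dlam_power_monom_support)
  fix y assume "y \<in> (\<lambda>s. u + of_nat s *\<^sub>R a 0) ` {..i}"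
  then obtain s where y: "y = u + of_nat s *\<^sub>R a 0" by blast
  show "supported_mod F (\<lambda>z. if z = y then 1 else 0)"
  proof (cases "y \<in> interior_pts")
    case True
    then show ?thesis
      using supported_mod_mono[OF assms(2) interior_monom_supported] unfolding monom_def by blast
  next
    case False
    with shift_a0_in_interior_pts[OF u, of s] y have "\<not> (0 < s \<or> u \<in> interior_pts)" by blast
    then have "y = u" and "u \<in> F" using y assms(3) by auto
    then show ?thesis by (intro supported_mod_support) (auto split: if_splits)
  qed
qed

end

theorem proposition8p1:
  fixes m :: nat and a :: "nat \<Rightarrow> real ^ 'n" and l :: "nat \<Rightarrow> nat"
    and Ck :: "(real ^ 'n) set" and u :: "real ^ 'n"
  assumes lat: "\<forall>j\<in>{0..m}. lattice_pt (a j)"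
    and inj: "inj_on a {1..m}"
    and indep: "independent (a ` {1..m})"
    and lpos: "\<forall>j\<in>{0..m}. 0 < l j"
    and lgcd: "Gcd (l ` {0..m}) = 1"
    and rel: "real (l 0) *\<^sub>R a 0 = (\<Sum>j\<in>{1..m}. real (l j) *\<^sub>R a j)"
    and lsum: "l 0 = (\<Sum>j\<in>{1..m}. l j)"
    and coset: "\<exists>v\<in>VZ m a. Ck = (\<lambda>w. v + w) ` ZAplus m a"
    and uM: "u \<in> VZ m a \<inter> coneA m a \<inter> Ck"
  shows "(u \<in> rel_interior (coneA m a) \<longrightarrow>
            (\<exists>c :: nat \<Rightarrow> ratfun. (\<exists>i\<le>card (Bk_int m a Ck). c i \<noteq> 0) \<and>
               (\<lambda>w. \<Sum>i\<le>card (Bk_int m a Ck). c i * ((Dlam a l ^^ i) (monom u)) w)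
                 \<in> DSk m a l (VZ m a \<inter> coneA m a \<inter> Ck)))
       \<and> (u \<in> rel_frontier (coneA m a) \<longrightarrow>
            (\<exists>c :: nat \<Rightarrow> ratfun. (\<exists>i\<le>card (Bk_int m a Ck) + 1. c i \<noteq> 0) \<and>
               (\<lambda>w. \<Sum>i\<le>card (Bk_int m a Ck) + 1. c i * ((Dlam a l ^^ i) (monom u)) w)
                 \<in> DSk m a l (VZ m a \<inter> coneA m a \<inter> Ck)))"
proof -
  interpret dwork_family m a l Ck
    using lat inj indep lpos rel lsum coset by unfold_locales
  show ?thesis
  proof (intro conjI impI)
    assume "u \<in> rel_interior (coneA m a)"
    then have "u \<in> interior_pts" by (rule rel_interior_in_interior_pts[OF uM])
    then show "\<exists>c. (\<exists>i\<le>card (Bk_int m a Ck). c i \<noteq> 0) \<and>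
        (\<lambda>w. \<Sum>i\<le>card (Bk_int m a Ck). c i * (Dlam a l ^^ i) (monom u) w) \<in> DSk m a l Mk"
      using Dlam_power_supported[OF uM order_refl] finite_Bk_int
      by (intro supported_mod_dependent_atMost) auto
  next
    show "\<exists>c. (\<exists>i\<le>card (Bk_int m a Ck) + 1. c i \<noteq> 0) \<and>
        (\<lambda>w. \<Sum>i\<le>card (Bk_int m a Ck) + 1. c i * (Dlam a l ^^ i) (monom u) w) \<in> DSk m a l Mk"
      using Dlam_power_supported[OF uM subset_insertI] finite_Bk_int
      by (intro supported_mod_dependent_atMost[of "insert u (Bk_int m a Ck)"])
        (auto simp: card_insert_if)
  qed
qed

end
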